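(* Let $\mathcal{L}$ be a set of lines of $\mathsf{PG}(7,q^3)$ satisfying (Pt): every point of $\mathsf{PG}(7,q^3)$ is incident with $0$ or $q+1$ elements of $\mathcal{L}$; (Pl): every plane contains $0$, $1$ or $q+1$ elements of $\mathcal{L}$; (Sd): every solid contains $0,1,q+1$ or $2q+1$ elements of $\mathcal{L}$; and (4d'): every $4$-dimensional subspace contains at most $q^2+2q+1$ elements of $\mathcal{L}$. Then no five lines of $\mathcal{L}$ form a pentagon.
   Context: A pentagon is a set of five lines $L_1,\dots,L_5$ such that $L_i$ meets $L_{i+1}$ (indices mod $5$) and the five intersection points are pairwise distinct. *)

theory Defs
  imports "HOL-Analysis.Analysis"
begin

text \<open>PG(7,F) modelled via the vector space F^8 over a field F: a projective
  k-dimensional subspace is a linear subspace of F^8 of vector dimension k+1.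
  Points: k=0, lines: k=1, planes: k=2, solids: k=3, 4-spaces: k=4.\<close>

definition proj_sub :: "nat \<Rightarrow> ('a::field ^ 8) set \<Rightarrow> bool" where
  "proj_sub k S \<longleftrightarrow> vec.subspace S \<and> vec.dim S = k + 1"

definition n_in :: "('a::field ^ 8) set set \<Rightarrow> ('a ^ 8) set \<Rightarrow> nat" where
  "n_in Ls S = card {L \<in> Ls. L \<subseteq> S}"

definition pentagon :: "(nat \<Rightarrow> ('a::field ^ 8) set) \<Rightarrow> bool" where
  "pentagon L \<longleftrightarrow>
     (\<forall>i<5. proj_sub 1 (L i)) \<and>
     (\<forall>i<5. proj_sub 0 (L i \<inter> L (Suc i mod 5))) \<and>
     inj_on (\<lambda>i. L i \<inter> L (Suc i mod 5)) {..<5}"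

end

theory Submission
  imports Defs
begin

text \<open>
  If two lines of the set meet in a point P, every line of the set through P lies in the plane
  they span: a third line N through P outside that plane would span with it a solid containing
  three planes with q + 1 lines each, pairwise sharing at most one line, hence at least
  3q > 2q + 1 lines. Consequently the set contains no triangles.

  Let a, b, c, d, e be a pentagon with vertices P1 = a \<inter> b, ..., P5 = e \<inter> a. The planes \<langle>a,b\<rangle> and
  \<langle>c,d\<rangle> meet only in P2, for otherwise they span a solid containing the 2q + 2 lines through P1
  and P3 (these pencils are disjoint as there are no triangles); hence d is skew to \<langle>a,b\<rangle>. The
  4-space \<langle>a,b,d\<rangle> is then covered by the q + 1 solids \<langle>K,d\<rangle>, K a line through P1, which pairwise
  meet in the plane \<langle>P1,d\<rangle>; d is the only line of the set in that plane, as the solid \<langle>a,d\<rangle>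
  already holds d and the q + 1 lines through P5. Each of these solids contains at least q + 1
  lines, and \<langle>a,d\<rangle>, \<langle>b,d\<rangle> contain 2q + 1 (the lines through P5, resp. P2, and d), so the 4-space
  contains at least q^2 + 3q > q^2 + 2q + 1 lines.
\<close>

section \<open>Joins of projective subspaces\<close>

definition join :: "('a::field ^ 'n) set \<Rightarrow> ('a ^ 'n) set \<Rightarrow> ('a ^ 'n) set" where
  "join A B = vec.span (A \<union> B)"

lemma subspace_join [simp]: "vec.subspace (join A B)"
  by (simp add: join_def)

lemma join_upper1: "A \<subseteq> join A B" and join_upper2: "B \<subseteq> join A B"
  by (auto simp: join_def intro: vec.span_base)

lemma join_least: "A \<subseteq> C \<Longrightarrow> B \<subseteq> C \<Longrightarrow> vec.subspace C \<Longrightarrow> join A B \<subseteq> C"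
  unfolding join_def by (rule vec.span_minimal) auto

lemma dim_join_Int:
  assumes "vec.subspace A" "vec.subspace B"
  shows "vec.dim (join A B) + vec.dim (A \<inter> B) = vec.dim A + vec.dim B"
proof -
  have "vec.span A = A" "vec.span B = B"
    using assms by (simp_all add: vec.span_eq_iff)
  then have "join A B = {x + y |x y. x \<in> A \<and> y \<in> B}"
    unfolding join_def vec.span_Un by (simp del: vec.span_eq_iff)
  then show ?thesis
    using vec.dim_sums_Int[OF assms] by simp
qed

lemma dim_Int_less:
  assumes "vec.subspace A" "vec.subspace B" "\<not> A \<subseteq> B"
  shows "vec.dim (A \<inter> B) < vec.dim A"
proof (rule ccontr)
  assume "\<not> ?thesis"
  then have "A \<inter> B = A"
    using vec.subspace_dim_equal[of "A \<inter> B" A] assms vec.subspace_inter by auto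
  then show False
    using assms(3) by blast
qed

lemma proj_sub_subspace: "proj_sub k S \<Longrightarrow> vec.subspace S"
  by (simp add: proj_sub_def)

lemma line_neq_if_Int_point: "proj_sub 1 K \<Longrightarrow> proj_sub 0 (K \<inter> K') \<Longrightarrow> K \<noteq> K'"
  by (auto simp: proj_sub_def)

lemma proj_sub_subset_le: "proj_sub k A \<Longrightarrow> proj_sub m B \<Longrightarrow> A \<subseteq> B \<Longrightarrow> k \<le> m"
  using vec.dim_subset[of A B] by (simp add: proj_sub_def)

lemma proj_sub_subset_eq: "proj_sub k A \<Longrightarrow> proj_sub m B \<Longrightarrow> A \<subseteq> B \<Longrightarrow> m \<le> k \<Longrightarrow> A = B"
  using vec.subspace_dim_equal[of A B] by (simp add: proj_sub_def)

lemma proj_sub_join_Int: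
  assumes "proj_sub m A" "proj_sub n B" "proj_sub k (A \<inter> B)"
  shows "proj_sub (m + n - k) (join A B)"
proof -
  have "k \<le> m"
    using proj_sub_subset_le[of k "A \<inter> B" m A] assms by simp
  then show ?thesis
    using dim_join_Int[of A B] assms unfolding proj_sub_def by simp
qed

lemma proj_sub_join_skew:
  assumes "proj_sub m A" "proj_sub n B" "A \<inter> B \<subseteq> {0}"
  shows "proj_sub (m + n + 1) (join A B)"
proof -
  have "vec.dim (A \<inter> B) = 0"
    using assms(3) by simp
  then show ?thesis
    using dim_join_Int[of A B] assms(1,2) by (simp add: proj_sub_def del: vec.dim_eq_0)
qed

lemma not_subset_skew: "A \<inter> B \<subseteq> {0} \<Longrightarrow> proj_sub k X \<Longrightarrow> X \<subseteq> A \<Longrightarrow> \<not> X \<subseteq> B"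
  using vec.dim_subset[of X "{0}"] by (auto simp: proj_sub_def)

lemma point_Int_skew: "proj_sub 0 P \<Longrightarrow> vec.subspace X \<Longrightarrow> \<not> P \<subseteq> X \<Longrightarrow> P \<inter> X \<subseteq> {0}"
  using dim_Int_less[of P X] by (simp add: proj_sub_def)

lemma line_Int_eq_point:
  assumes "proj_sub 1 L" "vec.subspace X" "\<not> L \<subseteq> X" "proj_sub 0 P" "P \<subseteq> L" "P \<subseteq> X"
  shows "L \<inter> X = P"
proof -
  have "proj_sub 0 (L \<inter> X)"
    using dim_Int_less[of L X] vec.dim_subset[of P "L \<inter> X"] vec.subspace_inter[of L X] assms
    by (simp add: proj_sub_def)
  then show ?thesis
    using proj_sub_subset_eq[of 0 P 0 "L \<inter> X"] assms by simp
qed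

lemma proj_sub_join_line_meeting:
  assumes "proj_sub k S" "proj_sub 1 L" "\<not> L \<subseteq> S" "proj_sub 0 P" "P \<subseteq> L" "P \<subseteq> S"
  shows "proj_sub (k + 1) (join S L)"
proof -
  have "S \<inter> L = P"
    using line_Int_eq_point[of L S P] assms proj_sub_subspace[OF assms(1)] by (simp add: Int_commute)
  then show ?thesis
    using proj_sub_join_Int[of k S 1 L 0] assms by simp
qed

lemma line_eq_join_points:
  assumes "proj_sub 1 L" "proj_sub 0 P" "proj_sub 0 Q" "P \<noteq> Q" "P \<subseteq> L" "Q \<subseteq> L"
  shows "L = join P Q"
proof -
  have "P \<inter> Q \<subseteq> {0}"
    using assms proj_sub_subset_eq[of 0 P 0 Q] by (intro point_Int_skew) (auto intro: proj_sub_subspace)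
  then have "proj_sub 1 (join P Q)"
    using proj_sub_join_skew[of 0 P 0 Q] assms by simp
  moreover have "join P Q \<subseteq> L"
    using assms by (intro join_least) (auto intro: proj_sub_subspace)
  ultimately show ?thesis
    using proj_sub_subset_eq[of 1 "join P Q" 1 L] assms(1) by simp
qed

lemma plane_join_meeting_lines:
  assumes "proj_sub 1 K" "proj_sub 1 K'" "K \<noteq> K'" "proj_sub 0 P" "P \<subseteq> K" "P \<subseteq> K'"
  shows "proj_sub 2 (join K K')"
proof -
  have "\<not> K \<subseteq> K'"
    using assms proj_sub_subset_eq by blast
  then have "K \<inter> K' = P"
    using assms by (intro line_Int_eq_point) (auto intro: proj_sub_subspace)
  then show ?thesis
    using proj_sub_join_Int[of 1 K 1 K' 0] assms by (simp add: numeral_2_eq_2)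
qed

lemma proj_sub_Int_hyperplanes:
  assumes "proj_sub (k + 1) A" "proj_sub (k + 1) B" "A \<noteq> B" "proj_sub (k + 2) S" "A \<subseteq> S" "B \<subseteq> S"
  shows "proj_sub k (A \<inter> B)"
proof -
  have "\<not> A \<subseteq> B"
    using assms proj_sub_subset_eq by blast
  then have "vec.dim (A \<inter> B) < k + 2"
    using dim_Int_less[of A B] assms by (simp add: proj_sub_def)
  moreover have "vec.dim (join A B) \<le> k + 3"
    using vec.dim_subset[OF join_least[of A S B]] assms by (simp add: proj_sub_def)
  ultimately show ?thesis
    using dim_join_Int[of A B] vec.subspace_inter[of A B] assms by (simp add: proj_sub_def)
qed

lemma Int_joins_skew_line:
  assumes \<pi>: "proj_sub 2 \<pi>" and d: "proj_sub 1 d" "\<pi> \<inter> d \<subseteq> {0}"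
    and K: "proj_sub 1 K" "proj_sub 1 K'" "K \<noteq> K'" "K \<subseteq> \<pi>" "K' \<subseteq> \<pi>"
    and P: "proj_sub 0 P" "P \<subseteq> K" "P \<subseteq> K'"
  shows "join K d \<inter> join K' d = join P d"
proof -
  have "P \<inter> d \<subseteq> {0}"
    using P K d by blast
  have solid: "proj_sub 3 (join L d)" if "proj_sub 1 L" "L \<subseteq> \<pi>" for L
    using proj_sub_join_skew[of 1 L 1 d] that d by (auto simp: eval_nat_numeral)
  have W: "proj_sub 4 (join \<pi> d)"
    using proj_sub_join_skew[of 2 \<pi> 1 d] \<pi> d by simp
  have sub_W: "join L d \<subseteq> join \<pi> d" if "L \<subseteq> \<pi>" for L
    using that join_upper1[of \<pi> d] join_upper2[of d \<pi>] by (intro join_least) auto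
  have "join K K' \<subseteq> \<pi>"
    using K \<pi> by (intro join_least) (auto intro: proj_sub_subspace)
  then have \<pi>_eq: "join K K' = \<pi>"
    using proj_sub_subset_eq plane_join_meeting_lines[OF K(1-3) P] \<pi> by blast
  have "join K d \<noteq> join K' d"
  proof
    assume eq: "join K d = join K' d"
    have "\<pi> \<subseteq> join K d"
      unfolding \<pi>_eq[symmetric] using join_upper1[of K d] join_upper1[of K' d] eq
      by (intro join_least) auto
    then have "join \<pi> d \<subseteq> join K d"
      using join_upper2[of d K] by (intro join_least) auto
    then show False
      using proj_sub_subset_le[OF W solid[OF K(1,4)]] by simp
  qed
  then have "proj_sub 2 (join K d \<inter> join K' d)"
    using proj_sub_Int_hyperplanes[of 2 "join K d" "join K' d" "join \<pi> d"] solid K sub_W W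
    by simp
  moreover have "proj_sub 2 (join P d)"
    using proj_sub_join_skew[of 0 P 1 d] P \<open>P \<inter> d \<subseteq> {0}\<close> d by (simp add: eval_nat_numeral)
  moreover have "join P d \<subseteq> join K d \<inter> join K' d"
    using P join_upper1[of K d] join_upper1[of K' d] join_upper2[of d K] join_upper2[of d K']
    by (intro join_least vec.subspace_inter subspace_join) auto
  ultimately show ?thesis
    using proj_sub_subset_eq by blast
qed

lemma point_not_in_join_skew_line:
  assumes lines: "proj_sub 1 a" "proj_sub 1 d" "a \<inter> d \<subseteq> {0}"
    and points: "proj_sub 0 P" "proj_sub 0 R" "P \<subseteq> a" "R \<subseteq> a" "R \<noteq> P"
  shows "\<not> P \<subseteq> join R d"
proof
  assume "P \<subseteq> join R d"
  moreover have "a = join R P"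
    using line_eq_join_points lines points by blast
  ultimately have "a \<subseteq> join R d"
    using join_upper1[of R d] by (simp add: join_least)
  then have "join a d \<subseteq> join R d"
    using join_upper2[of d R] by (intro join_least) auto
  moreover have "R \<inter> d \<subseteq> {0}"
    using lines points by blast
  ultimately show False
    using proj_sub_subset_le[of 3 "join a d" 2 "join R d"] proj_sub_join_skew[of 1 a 1 d]
      proj_sub_join_skew[of 0 R 1 d] lines points
    by (simp add: eval_nat_numeral)
qed

section \<open>Line sets with the properties (Pt), (Pl) and (Sd)\<close>

lemma card_Un3_ge:
  assumes "finite A" "finite B" "finite C"
  shows "card A + card B + card C \<le> card (A \<union> B \<union> C) + card (A \<inter> B) + card (A \<inter> C) + card (B \<inter> C)"
proof -
  have "card ((A \<union> B) \<inter> C) \<le> card (A \<inter> C) + card (B \<inter> C)"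
    using card_Un_le[of "A \<inter> C" "B \<inter> C"] by (simp add: Int_Un_distrib2)
  then show ?thesis
    using card_Un_Int[of A B] card_Un_Int[of "A \<union> B" C] assms by simp
qed

locale line_set =
  fixes Ls :: "('a::{field,finite} ^ 8) set set" and q :: nat
  assumes two_le_q: "2 \<le> q"
    and proj_line: "L \<in> Ls \<Longrightarrow> proj_sub 1 L"
    and Pt: "proj_sub 0 P \<Longrightarrow> card {L \<in> Ls. P \<subseteq> L} \<in> {0, q + 1}"
    and Pl: "proj_sub 2 S \<Longrightarrow> n_in Ls S \<in> {0, 1, q + 1}"
    and Sd: "proj_sub 3 S \<Longrightarrow> n_in Ls S \<in> {0, 1, q + 1, 2 * q + 1}"
begin

definition lines_in :: "('a ^ 8) set \<Rightarrow> ('a ^ 8) set set" where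
  "lines_in S = {L \<in> Ls. L \<subseteq> S}"

definition lines_through :: "('a ^ 8) set \<Rightarrow> ('a ^ 8) set set" where
  "lines_through P = {L \<in> Ls. P \<subseteq> L}"

lemma card_lines_in_plane_cases: "proj_sub 2 S \<Longrightarrow> card (lines_in S) \<in> {0, 1, q + 1}"
  using Pl by (simp add: n_in_def lines_in_def)

lemma card_lines_in_solid_cases: "proj_sub 3 S \<Longrightarrow> card (lines_in S) \<in> {0, 1, q + 1, 2 * q + 1}"
  using Sd by (simp add: n_in_def lines_in_def)

lemma card_lines_in_plane:
  assumes "proj_sub 2 S" "K \<in> lines_in S" "K' \<in> lines_in S" "K \<noteq> K'"
  shows "card (lines_in S) = q + 1"
  using card_mono[of "lines_in S" "{K, K'}"] card_lines_in_plane_cases[OF assms(1)] assms(2-)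
  by auto

lemma card_lines_in_solid_le: "proj_sub 3 S \<Longrightarrow> card (lines_in S) \<le> 2 * q + 1"
  using card_lines_in_solid_cases[of S] by auto

lemma card_lines_in_solid_ge:
  assumes "proj_sub 3 S" "K \<in> lines_in S" "K' \<in> lines_in S" "K \<noteq> K'"
  shows "q + 1 \<le> card (lines_in S)"
  using card_mono[of "lines_in S" "{K, K'}"] card_lines_in_solid_cases[OF assms(1)] assms(2-)
  by auto

lemma card_lines_in_solid_eq:
  "proj_sub 3 S \<Longrightarrow> q + 2 \<le> card (lines_in S) \<Longrightarrow> card (lines_in S) = 2 * q + 1"
  using card_lines_in_solid_cases[of S] by auto

lemma card_lines_through:
  assumes "proj_sub 0 P" "K \<in> Ls" "P \<subseteq> K"
  shows "card (lines_through P) = q + 1"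
proof -
  have "card (lines_through P) \<in> {0, q + 1}"
    using Pt[OF assms(1)] by (simp add: lines_through_def)
  moreover have "card (lines_through P) \<noteq> 0"
    using assms by (auto simp: lines_through_def)
  ultimately show ?thesis
    by auto
qed

lemma card_lines_in_Int_planes_le:
  assumes "proj_sub 2 A" "proj_sub 2 B" "A \<noteq> B" "proj_sub 3 S" "A \<subseteq> S" "B \<subseteq> S"
  shows "card (lines_in A \<inter> lines_in B) \<le> 1"
proof -
  have "proj_sub 1 (A \<inter> B)"
    using proj_sub_Int_hyperplanes[of 1 A B S] assms by (simp add: eval_nat_numeral)
  then have "lines_in A \<inter> lines_in B \<subseteq> {A \<inter> B}"
    using proj_line proj_sub_subset_eq by (fastforce simp: lines_in_def)
  then show ?thesis
    using card_mono[of "{A \<inter> B}"] by fastforce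
qed

lemma card_lines_in_solid_three_planes_ge:
  assumes S: "proj_sub 3 S"
    and planes: "proj_sub 2 A" "proj_sub 2 B" "proj_sub 2 C" "A \<subseteq> S" "B \<subseteq> S" "C \<subseteq> S"
    and distinct: "A \<noteq> B" "A \<noteq> C" "B \<noteq> C"
    and full: "card (lines_in A) = q + 1" "card (lines_in B) = q + 1" "card (lines_in C) = q + 1"
  shows "3 * q \<le> card (lines_in S)"
proof -
  have "card (lines_in A \<union> lines_in B \<union> lines_in C) \<le> card (lines_in S)"
    using planes by (intro card_mono) (auto simp: lines_in_def)
  moreover have "card (lines_in A \<inter> lines_in B) \<le> 1" "card (lines_in A \<inter> lines_in C) \<le> 1"
      "card (lines_in B \<inter> lines_in C) \<le> 1"
    using card_lines_in_Int_planes_le S planes distinct by blast+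
  ultimately show ?thesis
    using card_Un3_ge[of "lines_in A" "lines_in B" "lines_in C"] full by simp
qed

lemma lines_through_subset_join:
  assumes K: "K1 \<in> Ls" "K2 \<in> Ls" "K1 \<noteq> K2"
    and P: "proj_sub 0 P" "P \<subseteq> K1" "P \<subseteq> K2"
    and N: "N \<in> Ls" "P \<subseteq> N"
  shows "N \<subseteq> join K1 K2"
proof (rule ccontr)
  define \<pi> where "\<pi> = join K1 K2"
  define B where "B = join K1 N"
  define C where "C = join K2 N"
  define S where "S = join \<pi> N"
  assume "\<not> N \<subseteq> join K1 K2"
  then have N_out: "\<not> N \<subseteq> \<pi>"
    by (simp add: \<pi>_def)
  have lines: "proj_sub 1 K1" "proj_sub 1 K2" "proj_sub 1 N"
    using K N proj_line by auto
  have K_in: "K1 \<subseteq> \<pi>" "K2 \<subseteq> \<pi>" "K1 \<subseteq> B" "K2 \<subseteq> C" and N_in: "N \<subseteq> B" "N \<subseteq> C"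
    by (simp_all add: \<pi>_def B_def C_def join_upper1 join_upper2)
  have "N \<noteq> K1" "N \<noteq> K2"
    using N_out K_in by auto
  then have planes: "proj_sub 2 \<pi>" "proj_sub 2 B" "proj_sub 2 C"
    unfolding \<pi>_def B_def C_def using lines K P N by (auto intro: plane_join_meeting_lines)
  have S: "proj_sub 3 S"
    using proj_sub_join_line_meeting[OF planes(1) lines(3) N_out P(1) N(2)] P(2) K_in(1)
    by (simp add: S_def)
  have "\<pi> \<subseteq> S" "N \<subseteq> S"
    by (simp_all add: S_def join_upper1 join_upper2)
  moreover have "vec.subspace S"
    by (simp add: S_def)
  ultimately have in_S: "\<pi> \<subseteq> S" "B \<subseteq> S" "C \<subseteq> S"
    using K_in join_least[of K1 S N] join_least[of K2 S N] by (auto simp: B_def C_def)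
  have "\<pi> \<noteq> B" "\<pi> \<noteq> C"
    using N_in N_out by auto
  moreover have "B \<noteq> C"
  proof
    assume "B = C"
    then have "\<pi> \<subseteq> B"
      unfolding \<pi>_def using K_in proj_sub_subspace[OF planes(2)] by (intro join_least) auto
    then show False
      using proj_sub_subset_eq[OF planes(1,2)] \<open>\<pi> \<noteq> B\<close> by simp
  qed
  moreover have "card (lines_in \<pi>) = q + 1" "card (lines_in B) = q + 1" "card (lines_in C) = q + 1"
    using card_lines_in_plane planes K N K_in N_in \<open>N \<noteq> K1\<close> \<open>N \<noteq> K2\<close> \<open>K1 \<noteq> K2\<close>
    by (auto simp: lines_in_def)
  ultimately have "3 * q \<le> card (lines_in S)"
    using card_lines_in_solid_three_planes_ge[OF S planes in_S] by blast
  then show False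
    using card_lines_in_solid_le[OF S] two_le_q by simp
qed

lemma lines_through_eq_lines_in_join:
  assumes K: "K1 \<in> Ls" "K2 \<in> Ls" "K1 \<noteq> K2"
    and P: "proj_sub 0 P" "P \<subseteq> K1" "P \<subseteq> K2"
  shows "lines_through P = lines_in (join K1 K2)"
proof (rule card_subset_eq)
  show "lines_through P \<subseteq> lines_in (join K1 K2)"
    using lines_through_subset_join[OF K P] by (auto simp: lines_through_def lines_in_def)
  have "proj_sub 2 (join K1 K2)"
    using plane_join_meeting_lines K P proj_line by blast
  then show "card (lines_through P) = card (lines_in (join K1 K2))"
    using card_lines_in_plane[of "join K1 K2" K1 K2] card_lines_through[OF P(1) K(1) P(2)] K
    by (simp add: lines_in_def join_upper1 join_upper2)
qed simp

lemma lines_meeting_concurrent: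
  assumes lines: "x \<in> Ls" "y \<in> Ls" "z \<in> Ls" "z \<noteq> x"
    and A: "proj_sub 0 A" "A \<subseteq> x" "A \<subseteq> y"
    and B: "proj_sub 0 B" "B \<subseteq> y" "B \<subseteq> z" "A \<noteq> B"
    and C: "proj_sub 0 C" "C \<subseteq> z" "C \<subseteq> x"
  shows "C \<subseteq> y"
proof -
  have "y = join A B"
    using line_eq_join_points proj_line lines A B by blast
  also have "\<dots> \<subseteq> join z x"
    using A B join_upper1[of z x] join_upper2[of x z] by (intro join_least) auto
  finally have "y \<in> lines_through C"
    using lines_through_eq_lines_in_join[OF lines(3,1,4) C] lines by (simp add: lines_in_def)
  then show ?thesis
    by (simp add: lines_through_def)
qed

lemma lines_through_subset_join_skew_transversal:
  assumes lines: "a \<in> Ls" "d \<in> Ls" "e \<in> Ls" and skew: "a \<inter> d \<subseteq> {0}"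
    and P: "proj_sub 0 P" "P \<subseteq> a" "P \<subseteq> e"
    and Q: "proj_sub 0 Q" "Q \<subseteq> d" "Q \<subseteq> e"
  shows "lines_through P \<subseteq> lines_in (join a d)"
proof -
  have "P \<noteq> Q" "a \<noteq> e"
    using not_subset_skew[OF skew] P Q by blast+
  then have "e = join P Q"
    using line_eq_join_points proj_line lines P Q by blast
  also have "\<dots> \<subseteq> join a d"
    using P Q join_upper1[of a d] join_upper2[of d a] by (intro join_least) auto
  finally have "join a e \<subseteq> join a d"
    using join_upper1[of a d] by (intro join_least) auto
  then show ?thesis
    using lines_through_eq_lines_in_join[OF lines(1,3) \<open>a \<noteq> e\<close> P] by (auto simp: lines_in_def)
qed

lemma card_lines_in_join_skew_transversal:
  assumes lines: "a \<in> Ls" "d \<in> Ls" "e \<in> Ls" and skew: "a \<inter> d \<subseteq> {0}"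
    and P: "proj_sub 0 P" "P \<subseteq> a" "P \<subseteq> e"
    and Q: "proj_sub 0 Q" "Q \<subseteq> d" "Q \<subseteq> e"
  shows "card (lines_in (join a d)) = 2 * q + 1"
proof (rule card_lines_in_solid_eq)
  show "proj_sub 3 (join a d)"
    using proj_sub_join_skew[of 1 a 1 d] proj_line lines skew by (simp add: eval_nat_numeral)
  have "insert d (lines_through P) \<subseteq> lines_in (join a d)"
    using lines_through_subset_join_skew_transversal[OF assms] lines
    by (simp add: lines_in_def join_upper2)
  then have "card (insert d (lines_through P)) \<le> card (lines_in (join a d))"
    by (intro card_mono) simp_all
  moreover have "d \<notin> lines_through P"
    using not_subset_skew[OF skew] P by (auto simp: lines_through_def)
  ultimately show "q + 2 \<le> card (lines_in (join a d))"
    using card_lines_through[OF P(1) lines(1) P(2)] by simp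
qed

lemma lines_in_join_point_skew_transversal:
  assumes lines: "a \<in> Ls" "d \<in> Ls" "e \<in> Ls" and skew: "a \<inter> d \<subseteq> {0}"
    and P: "proj_sub 0 P" "P \<subseteq> a" "P \<subseteq> e"
    and Q: "proj_sub 0 Q" "Q \<subseteq> d" "Q \<subseteq> e"
    and R: "proj_sub 0 R" "R \<subseteq> a" "R \<noteq> P"
  shows "lines_in (join R d) = {d}"
proof -
  have solid: "proj_sub 3 (join a d)"
    using proj_sub_join_skew[of 1 a 1 d] proj_line lines skew by (simp add: eval_nat_numeral)
  have "R \<inter> d \<subseteq> {0}"
    using skew R by blast
  then have plane: "proj_sub 2 (join R d)"
    using proj_sub_join_skew[of 0 R 1 d] proj_line lines R by (simp add: eval_nat_numeral)
  have "join R d \<subseteq> join a d"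
    using R join_upper1[of a d] join_upper2[of d a] by (intro join_least) auto
  have "\<not> P \<subseteq> join R d"
    using point_not_in_join_skew_line proj_line lines skew P R by blast
  then have disjoint: "lines_through P \<inter> lines_in (join R d) = {}"
    by (auto simp: lines_through_def lines_in_def)
  have "lines_through P \<union> lines_in (join R d) \<subseteq> lines_in (join a d)"
    using lines_through_subset_join_skew_transversal[OF lines skew P Q] \<open>join R d \<subseteq> join a d\<close>
    by (auto simp: lines_in_def)
  then have "card (lines_through P \<union> lines_in (join R d)) \<le> card (lines_in (join a d))"
    by (intro card_mono) simp_all
  also have "\<dots> \<le> 2 * q + 1"
    using card_lines_in_solid_le[OF solid] .
  finally have "card (lines_in (join R d)) \<le> q"
    using card_Un_disjoint[of "lines_through P" "lines_in (join R d)"] disjoint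
      card_lines_through[OF P(1) lines(1) P(2)] by simp
  moreover have "d \<in> lines_in (join R d)"
    using lines by (simp add: lines_in_def join_upper2)
  ultimately have "card (lines_in (join R d)) = 1"
    using card_lines_in_plane_cases[OF plane] by auto
  then show ?thesis
    using \<open>d \<in> lines_in (join R d)\<close> by (metis card_1_singletonE singletonD)
qed

lemma sum_card_lines_in_join_pencil_le:
  assumes ab: "a \<in> Ls" "b \<in> Ls" "a \<noteq> b"
    and P: "proj_sub 0 P" "P \<subseteq> a" "P \<subseteq> b"
    and d: "d \<in> Ls" "join a b \<inter> d \<subseteq> {0}" "lines_in (join P d) = {d}"
  shows "(\<Sum>K\<in>lines_through P. card (lines_in (join K d)) - 1) \<le> card (lines_in (join (join a b) d))"
proof -
  define F where "F K = lines_in (join K d) - {d}" for K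
  have pencil: "proj_sub 1 K" "K \<subseteq> join a b" "P \<subseteq> K" if "K \<in> lines_through P" for K
  proof -
    have "K \<in> lines_in (join a b)"
      using that lines_through_eq_lines_in_join[OF ab P] by simp
    then show "proj_sub 1 K" "K \<subseteq> join a b" "P \<subseteq> K"
      using that proj_line by (simp_all add: lines_in_def lines_through_def)
  qed
  have plane: "proj_sub 2 (join a b)"
    using plane_join_meeting_lines proj_line ab P by blast
  have card_F: "card (F K) = card (lines_in (join K d)) - 1" for K
    using d(1) by (simp add: F_def lines_in_def join_upper2)
  have "F K \<inter> F K' = {}" if "K \<in> lines_through P" "K' \<in> lines_through P" "K \<noteq> K'" for K K'
  proof -
    have "join K d \<inter> join K' d = join P d"
      using Int_joins_skew_line[OF plane proj_line[OF d(1)] d(2) pencil(1)[OF that(1)]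
          pencil(1)[OF that(2)] that(3) pencil(2)[OF that(1)] pencil(2)[OF that(2)] P(1)
          pencil(3)[OF that(1)] pencil(3)[OF that(2)]] .
    then have "F K \<inter> F K' \<subseteq> lines_in (join P d) - {d}"
      by (auto simp: F_def lines_in_def)
    then show ?thesis
      using d(3) by simp
  qed
  then have "(\<Sum>K\<in>lines_through P. card (F K)) = card (\<Union>K\<in>lines_through P. F K)"
    by (intro card_UN_disjoint[symmetric]) simp_all
  also have "\<dots> \<le> card (lines_in (join (join a b) d))"
  proof (intro card_mono)
    have "join K d \<subseteq> join (join a b) d" if "K \<in> lines_through P" for K
      using pencil(2)[OF that] join_upper1[of "join a b" d] join_upper2[of d "join a b"]
      by (intro join_least) auto
    then show "(\<Union>K\<in>lines_through P. F K) \<subseteq> lines_in (join (join a b) d)"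
      unfolding F_def lines_in_def by blast
  qed simp
  finally show ?thesis
    by (simp add: card_F)
qed

lemma card_lines_in_join_pencil_ge:
  assumes ab: "a \<in> Ls" "b \<in> Ls" "a \<noteq> b"
    and P: "proj_sub 0 P" "P \<subseteq> a" "P \<subseteq> b"
    and d: "d \<in> Ls" "join a b \<inter> d \<subseteq> {0}" "lines_in (join P d) = {d}"
    and full: "card (lines_in (join a d)) = 2 * q + 1" "card (lines_in (join b d)) = 2 * q + 1"
  shows "q\<^sup>2 + 3 * q \<le> card (lines_in (join (join a b) d))"
proof -
  define A where "A = lines_through P"
  define f where "f K = card (lines_in (join K d)) - 1" for K
  have ab_A: "a \<in> A" "b \<in> A"
    using ab P by (simp_all add: A_def lines_through_def)
  have "q \<le> f K" if "K \<in> A" for K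
  proof -
    have K: "K \<in> lines_in (join a b)" "P \<subseteq> K"
      using that lines_through_eq_lines_in_join[OF ab P] by (auto simp: A_def lines_through_def)
    then have "K \<inter> d \<subseteq> {0}" "\<not> P \<subseteq> d"
      using d(2) not_subset_skew[OF d(2) P(1)] by (auto simp: lines_in_def)
    then have "proj_sub 3 (join K d)" "K \<noteq> d"
      using proj_sub_join_skew[of 1 K 1 d] proj_line d(1) K by (auto simp: lines_in_def eval_nat_numeral)
    then show ?thesis
      using card_lines_in_solid_ge[of "join K d" K d] K d(1)
      by (simp add: f_def lines_in_def join_upper1 join_upper2)
  qed
  then have "(card A - 2) * q \<le> (\<Sum>K\<in>A - {a} - {b}. f K)"
    using sum_bounded_below[of "A - {a} - {b}" q f] ab_A ab(3)
    by (simp add: card_Diff_singleton eval_nat_numeral)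
  moreover have "(\<Sum>K\<in>A. f K) = f a + f b + (\<Sum>K\<in>A - {a} - {b}. f K)"
    using ab_A ab(3) by (simp add: sum.remove)
  moreover have "card A = q + 1"
    using card_lines_through[OF P(1) ab(1) P(2)] by (simp add: A_def)
  ultimately have "q\<^sup>2 + 3 * q \<le> (\<Sum>K\<in>A. f K)"
    using full by (simp add: f_def power2_eq_square algebra_simps)
  also have "\<dots> \<le> card (lines_in (join (join a b) d))"
    using sum_card_lines_in_join_pencil_le[OF assms(1-9)] by (simp add: A_def f_def)
  finally show ?thesis .
qed

section \<open>Pentagons\<close>

context
  fixes a b c d e P1 P2 P3 P4 P5
  assumes sides: "a \<in> Ls" "b \<in> Ls" "c \<in> Ls" "d \<in> Ls" "e \<in> Ls"
    and vertices: "proj_sub 0 P1" "proj_sub 0 P2" "proj_sub 0 P3" "proj_sub 0 P4" "proj_sub 0 P5"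
    and meets: "a \<inter> b = P1" "b \<inter> c = P2" "c \<inter> d = P3" "d \<inter> e = P4" "e \<inter> a = P5"
    and distinct: "P1 \<noteq> P2" "P2 \<noteq> P3" "P5 \<noteq> P1"
begin

lemma pentagon_incidences:
  "P1 \<subseteq> a" "P1 \<subseteq> b" "P2 \<subseteq> b" "P2 \<subseteq> c" "P3 \<subseteq> c" "P3 \<subseteq> d"
  "P4 \<subseteq> d" "P4 \<subseteq> e" "P5 \<subseteq> e" "P5 \<subseteq> a"
  by (simp_all add: meets[symmetric])

lemma pentagon_sides_distinct: "a \<noteq> b" "b \<noteq> c" "c \<noteq> d" "d \<noteq> e" "e \<noteq> a"
proof -
  have "K \<noteq> K'" if "K \<in> Ls" "proj_sub 0 (K \<inter> K')" for K K'
    using line_neq_if_Int_point proj_line that by blast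
  then show "a \<noteq> b" "b \<noteq> c" "c \<noteq> d" "d \<noteq> e" "e \<noteq> a"
    using sides vertices meets by simp_all
qed

lemma pentagon_vertices_off_sides: "\<not> P1 \<subseteq> c" "\<not> P3 \<subseteq> b" "\<not> P2 \<subseteq> d"
proof -
  have off: "\<not> X \<subseteq> Z" if "proj_sub 0 X" "proj_sub 0 W" "X \<noteq> W" "X \<subseteq> Y" "Y \<inter> Z \<subseteq> W"
    for X W Y Z
    using proj_sub_subset_eq[of 0 X 0 W] that by blast
  show "\<not> P1 \<subseteq> c"
    by (rule off[OF vertices(1,2) distinct(1) pentagon_incidences(2)]) (use meets(2) in blast)
  show "\<not> P3 \<subseteq> b"
    by (rule off[OF vertices(3,2) distinct(2)[symmetric] pentagon_incidences(5)]) (use meets(2) in blast)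
  show "\<not> P2 \<subseteq> d"
    by (rule off[OF vertices(2,3) distinct(2) pentagon_incidences(4)]) (use meets(3) in blast)
qed

lemma pentagon_pencils_disjoint: "lines_through P1 \<inter> lines_through P3 = {}"
proof (rule ccontr)
  assume "lines_through P1 \<inter> lines_through P3 \<noteq> {}"
  then obtain N where N: "N \<in> Ls" "P1 \<subseteq> N" "P3 \<subseteq> N"
    by (auto simp: lines_through_def)
  then have "N \<noteq> c"
    using pentagon_vertices_off_sides(1) by auto
  then have "P3 \<subseteq> b"
    using lines_meeting_concurrent[of c b N P2 P1 P3] sides N vertices pentagon_incidences distinct
    by blast
  then show False
    using pentagon_vertices_off_sides(2) by simp
qed

lemma pentagon_planes: "proj_sub 2 (join a b)" "proj_sub 2 (join c d)"
  using plane_join_meeting_lines[OF proj_line[OF sides(1)] proj_line[OF sides(2)]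
      pentagon_sides_distinct(1) vertices(1) pentagon_incidences(1,2)]
    plane_join_meeting_lines[OF proj_line[OF sides(3)] proj_line[OF sides(4)]
      pentagon_sides_distinct(3) vertices(3) pentagon_incidences(5,6)] .

lemma pentagon_pencils: "lines_through P1 = lines_in (join a b)" "lines_through P3 = lines_in (join c d)"
  using lines_through_eq_lines_in_join[OF sides(1,2) pentagon_sides_distinct(1) vertices(1)
      pentagon_incidences(1,2)]
    lines_through_eq_lines_in_join[OF sides(3,4) pentagon_sides_distinct(3) vertices(3)
      pentagon_incidences(5,6)] .

lemma pentagon_planes_span_no_solid: "\<not> proj_sub 3 (join (join a b) (join c d))"
proof
  define W where "W = join (join a b) (join c d)"
  assume "proj_sub 3 (join (join a b) (join c d))"
  then have "card (lines_in W) \<le> 2 * q + 1"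
    using card_lines_in_solid_le by (simp add: W_def)
  moreover have "lines_through P1 \<union> lines_through P3 \<subseteq> lines_in W"
    using pentagon_pencils join_upper1[of "join a b" "join c d"] join_upper2[of "join c d" "join a b"]
    by (auto simp: W_def lines_in_def)
  then have "card (lines_through P1 \<union> lines_through P3) \<le> card (lines_in W)"
    by (intro card_mono) simp_all
  ultimately have "2 * (q + 1) \<le> 2 * q + 1"
    using card_Un_disjoint[of "lines_through P1" "lines_through P3"] pentagon_pencils_disjoint
      card_lines_through[OF vertices(1) sides(1) pentagon_incidences(1)]
      card_lines_through[OF vertices(3) sides(3) pentagon_incidences(5)]
    by simp
  then show False
    by simp
qed

lemma pentagon_planes_Int: "join a b \<inter> join c d = P2"
proof -
  define \<pi>1 where "\<pi>1 = join a b"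
  define \<pi>3 where "\<pi>3 = join c d"
  have P2_in: "P2 \<subseteq> \<pi>1 \<inter> \<pi>3"
    using pentagon_incidences(3,4) join_upper2[of b a] join_upper1[of c d] by (auto simp: \<pi>1_def \<pi>3_def)
  have "\<not> \<pi>3 \<subseteq> \<pi>1"
  proof
    assume "\<pi>3 \<subseteq> \<pi>1"
    then have "c \<in> lines_in \<pi>1"
      unfolding lines_in_def \<pi>3_def using sides(3) join_upper1[of c d] by blast
    then have "c \<in> lines_through P1"
      using pentagon_pencils(1) by (simp add: \<pi>1_def)
    then show False
      using pentagon_vertices_off_sides(1) by (simp add: lines_through_def)
  qed
  then have "vec.dim (\<pi>1 \<inter> \<pi>3) < 3"
    using dim_Int_less[of \<pi>3 \<pi>1] pentagon_planes by (simp add: \<pi>1_def \<pi>3_def proj_sub_def Int_commute)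
  moreover have "1 \<le> vec.dim (\<pi>1 \<inter> \<pi>3)"
    using vec.dim_subset[OF P2_in] vertices(2) by (simp add: proj_sub_def)
  moreover have "\<not> proj_sub 1 (\<pi>1 \<inter> \<pi>3)"
    using proj_sub_join_Int[OF pentagon_planes, of 1] pentagon_planes_span_no_solid
    by (auto simp: \<pi>1_def \<pi>3_def eval_nat_numeral)
  moreover have "vec.subspace (\<pi>1 \<inter> \<pi>3)"
    using pentagon_planes by (simp add: \<pi>1_def \<pi>3_def proj_sub_def vec.subspace_inter)
  ultimately have "proj_sub 0 (\<pi>1 \<inter> \<pi>3)"
    unfolding proj_sub_def by simp
  then show ?thesis
    using proj_sub_subset_eq[of 0 P2 0 "\<pi>1 \<inter> \<pi>3"] vertices(2) P2_in by (simp add: \<pi>1_def \<pi>3_def)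
qed

lemma pentagon_plane_skew_side: "join a b \<inter> d \<subseteq> {0}"
proof -
  have "P2 \<inter> d \<subseteq> {0}"
    using point_Int_skew pentagon_vertices_off_sides(3) vertices(2) proj_sub_subspace proj_line sides(4)
    by blast
  then show ?thesis
    using pentagon_planes_Int join_upper2[of d c] by blast
qed

lemma no_pentagon:
  assumes D4: "\<And>S. proj_sub 4 S \<Longrightarrow> card (lines_in S) \<le> q\<^sup>2 + 2 * q + 1"
  shows False
proof -
  note inc = pentagon_incidences
  have skew: "join a b \<inter> d \<subseteq> {0}"
    by (rule pentagon_plane_skew_side)
  then have "a \<inter> d \<subseteq> {0}" "b \<inter> d \<subseteq> {0}"
    using join_upper1[of a b] join_upper2[of b a] by blast+
  then have "card (lines_in (join a d)) = 2 * q + 1" "card (lines_in (join b d)) = 2 * q + 1"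
      "lines_in (join P1 d) = {d}"
    using card_lines_in_join_skew_transversal[of a d e P5 P4]
      card_lines_in_join_skew_transversal[of b d c P2 P3]
      lines_in_join_point_skew_transversal[of a d e P5 P4 P1]
      sides vertices inc distinct by auto
  then have "q\<^sup>2 + 3 * q \<le> card (lines_in (join (join a b) d))"
    using card_lines_in_join_pencil_ge[of a b P1 d] pentagon_sides_distinct(1) sides vertices inc skew
    by blast
  moreover have "proj_sub 4 (join (join a b) d)"
    using proj_sub_join_skew[OF pentagon_planes(1) proj_line[OF sides(4)] skew]
    by (simp add: eval_nat_numeral)
  ultimately show False
    using D4 two_le_q by fastforce
qed

end

end

theorem mainTheorem18:
  fixes q :: nat and Ls :: "('a::{field,finite} ^ 8) set set"
  assumes card_F: "CARD('a) = q ^ 3"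
    and lines: "\<forall>L\<in>Ls. proj_sub 1 L"
    and Pt: "\<forall>P. proj_sub 0 P \<longrightarrow> card {L \<in> Ls. P \<subseteq> L} \<in> {0, q + 1}"
    and Pl: "\<forall>S. proj_sub 2 S \<longrightarrow> n_in Ls S \<in> {0, 1, q + 1}"
    and Sd: "\<forall>S. proj_sub 3 S \<longrightarrow> n_in Ls S \<in> {0, 1, q + 1, 2 * q + 1}"
    and D4: "\<forall>S. proj_sub 4 S \<longrightarrow> n_in Ls S \<le> q ^ 2 + 2 * q + 1"
  shows "\<not> (\<exists>L. (\<forall>i<5. L i \<in> Ls) \<and> pentagon L)"
proof
  assume "\<exists>L. (\<forall>i<5. L i \<in> Ls) \<and> pentagon L"
  then obtain L where "\<forall>i<5. L i \<in> Ls" and "pentagon L"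
    by blast
  then have sides: "L 0 \<in> Ls" "L 1 \<in> Ls" "L 2 \<in> Ls" "L 3 \<in> Ls" "L 4 \<in> Ls"
    by simp_all
  define P where "P = (\<lambda>i. L i \<inter> L (Suc i mod 5))"
  have "\<forall>i<5. proj_sub 0 (P i)" and "inj_on P {..<5}"
    using \<open>pentagon L\<close> by (simp_all add: pentagon_def P_def)
  then have vertices: "proj_sub 0 (P 0)" "proj_sub 0 (P 1)" "proj_sub 0 (P 2)" "proj_sub 0 (P 3)"
      "proj_sub 0 (P 4)" and distinct: "P 0 \<noteq> P 1" "P 1 \<noteq> P 2" "P 4 \<noteq> P 0"
    by (simp_all add: inj_on_contraD)
  have "2 \<le> CARD('a)"
    using card_mono[of UNIV "{0::'a, 1}"] by simp
  then have "2 \<le> q"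
    using card_F by (cases "q \<le> 1") (auto simp: le_Suc_eq power_le_one)
  then interpret line_set Ls q
    using lines Pt Pl Sd by unfold_locales auto
  have D4': "\<And>S. proj_sub 4 S \<Longrightarrow> card (lines_in S) \<le> q\<^sup>2 + 2 * q + 1"
    using D4 by (simp add: n_in_def lines_in_def)
  have meets: "L 0 \<inter> L 1 = P 0" "L 1 \<inter> L 2 = P 1" "L 2 \<inter> L 3 = P 2" "L 3 \<inter> L 4 = P 3"
      "L 4 \<inter> L 0 = P 4"
    by (simp_all add: P_def numeral_2_eq_2)
  show False
    by (rule no_pentagon[OF sides vertices meets distinct D4'])
qed

end
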